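(* Let $F\in[0,1]$, $0\le p\le F$, and let $\rho_k=p|\Psi_{00}\rangle\langle\Psi_{00}|+(1-p)\sigma_k\in S_{p,F}$ for $k=1,2$, where $\sigma_1,\sigma_2$ are density operators. Write $\tilde p'_{ij}=p'_{ij}(\sigma_1\otimes\sigma_2)$ and $\tilde F'_{ij}=F'_{ij}(\sigma_1\otimes\sigma_2)$. Then for all $i,j$, $$p'_{ij}(\rho_1\otimes\rho_2)=\frac p2-\frac{p^2}4+(1-p)^2\tilde p'_{ij},\qquad F'_{ij}(\rho_1\otimes\rho_2)=\frac{2pF-p^2+4(1-p)^2\tilde p'_{ij}\tilde F'_{ij}}{2p-p^2+4(1-p)^2\tilde p'_{ij}}.$$
   Context: For qubit registers $(R,T)$, $|\Psi_{ij}\rangle_{RT}=(I_R\otimes(X^iZ^j)_T)\tfrac1{\sqrt2}(|00\rangle+|11\rangle)$. $S_{p,F}$ is the set of two-qubit density operators $\rho$ with $\rho=p|\Psi_{00}\rangle\langle\Psi_{00}|+(1-p)\sigma$ for some density operator $\sigma$ and $\langle\Psi_{00}|\rho|\Psi_{00}\rangle=F$. For two-qubit states $\tau_1$ on $(A_1,B_1)$ and $\tau_2$ on $(A_2,B_2)$: $p'_{ij}(\tau_1\otimes\tau_2)=\mathrm{Tr}[|\Psi_{ij}\rangle\langle\Psi_{ij}|_{A_1A_2}\tau_1\otimes\tau_2]$ and $F'_{ij}(\tau_1\otimes\tau_2)=\frac1{p'_{ij}}\mathrm{Tr}[|\Psi_{ij}\rangle\langle\Psi_{ij}|_{B_1B_2}|\Psi_{ij}\rangle\langle\Psi_{ij}|_{A_1A_2}\tau_1\otimes\tau_2]$.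 The product $\tilde p'_{ij}\tilde F'_{ij}$ denotes $\mathrm{Tr}[|\Psi_{ij}\rangle\langle\Psi_{ij}|_{B_1B_2}|\Psi_{ij}\rangle\langle\Psi_{ij}|_{A_1A_2}\sigma_1\otimes\sigma_2]$. *)

theory Defs
  imports "HOL-Analysis.Analysis"
begin

text \<open>Operators are represented in the computational basis as functions
  nat \<Rightarrow> nat \<Rightarrow> complex; only indices below the dimension matter.
  A two-qubit basis index is 2*a+b (first register a, second b).
  A four-qubit index for registers (A1,B1,A2,B2) is 8*a1+4*b1+2*a2+b2.\<close>

type_synonym cmat = "nat \<Rightarrow> nat \<Rightarrow> complex"
type_synonym cvec = "nat \<Rightarrow> complex"

definition matmul :: "nat \<Rightarrow> cmat \<Rightarrow> cmat \<Rightarrow> cmat" where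
  "matmul n A B = (\<lambda>i k. \<Sum>j<n. A i j * B j k)"

definition idm :: cmat where
  "idm = (\<lambda>i j. if i = j then 1 else 0)"

fun mpow :: "nat \<Rightarrow> cmat \<Rightarrow> nat \<Rightarrow> cmat" where
  "mpow n A 0 = idm"
| "mpow n A (Suc k) = matmul n A (mpow n A k)"

definition kron :: "nat \<Rightarrow> cmat \<Rightarrow> cmat \<Rightarrow> cmat" where
  "kron n A B = (\<lambda>i j. A (i div n) (j div n) * B (i mod n) (j mod n))"

definition mapply :: "nat \<Rightarrow> cmat \<Rightarrow> cvec \<Rightarrow> cvec" where
  "mapply n A v = (\<lambda>i. \<Sum>j<n. A i j * v j)"

definition mtrace :: "nat \<Rightarrow> cmat \<Rightarrow> complex" where
  "mtrace n M = (\<Sum>i<n. M i i)"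

definition pauliX :: cmat where
  "pauliX = (\<lambda>a b. if a \<noteq> b then 1 else 0)"

definition pauliZ :: cmat where
  "pauliZ = (\<lambda>a b. if a = b then (if a = 0 then 1 else -1) else 0)"

definition phi_plus :: cvec where
  "phi_plus = (\<lambda>k. if k = 0 \<or> k = 3 then complex_of_real (1 / sqrt 2) else 0)"

definition bell :: "nat \<Rightarrow> nat \<Rightarrow> cvec" where
  "bell i j = mapply 4 (kron 2 idm (matmul 2 (mpow 2 pauliX i) (mpow 2 pauliZ j))) phi_plus"

definition proj :: "cvec \<Rightarrow> cmat" where
  "proj v = (\<lambda>a b. v a * cnj (v b))"

definition expect :: "nat \<Rightarrow> cmat \<Rightarrow> cvec \<Rightarrow> complex" where
  "expect n M v = (\<Sum>a<n. \<Sum>b<n. cnj (v a) * M a b * v b)"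

definition density :: "nat \<Rightarrow> cmat \<Rightarrow> bool" where
  "density n M \<longleftrightarrow>
     (\<forall>i<n. \<forall>j<n. M j i = cnj (M i j)) \<and>
     (\<forall>v. Im (expect n M v) = 0 \<and> Re (expect n M v) \<ge> 0) \<and>
     mtrace n M = 1"

definition S_pF :: "real \<Rightarrow> real \<Rightarrow> cmat \<Rightarrow> bool" where
  "S_pF p F \<rho> \<longleftrightarrow>
     (\<exists>\<sigma>. density 4 \<sigma> \<and>
        \<rho> = (\<lambda>a b. complex_of_real p * proj (bell 0 0) a b + complex_of_real (1 - p) * \<sigma> a b)) \<and>
     expect 4 \<rho> (bell 0 0) = complex_of_real F"

text \<open>tau1 on (A1,B1), tau2 on (A2,B2); joint order A1 B1 A2 B2.\<close>
definition tensor :: "cmat \<Rightarrow> cmat \<Rightarrow> cmat" where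
  "tensor t1 t2 = kron 4 t1 t2"

text \<open>Embed a two-qubit operator acting on (A1,A2) resp. (B1,B2) into the four-qubit space.\<close>
definition onA :: "cmat \<Rightarrow> cmat" where
  "onA P = (\<lambda>x y. P (2 * (x div 8) + (x div 2) mod 2) (2 * (y div 8) + (y div 2) mod 2) *
      (if (x div 4) mod 2 = (y div 4) mod 2 \<and> x mod 2 = y mod 2 then 1 else 0))"

definition onB :: "cmat \<Rightarrow> cmat" where
  "onB P = (\<lambda>x y. P (2 * ((x div 4) mod 2) + x mod 2) (2 * ((y div 4) mod 2) + y mod 2) *
      (if x div 8 = y div 8 \<and> (x div 2) mod 2 = (y div 2) mod 2 then 1 else 0))"

definition p'' :: "nat \<Rightarrow> nat \<Rightarrow> cmat \<Rightarrow> cmat \<Rightarrow> complex" where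
  "p'' i j t1 t2 = mtrace 16 (matmul 16 (onA (proj (bell i j))) (tensor t1 t2))"

text \<open>the product p'F' (numerator of F')\<close>
definition pF'' :: "nat \<Rightarrow> nat \<Rightarrow> cmat \<Rightarrow> cmat \<Rightarrow> complex" where
  "pF'' i j t1 t2 = mtrace 16 (matmul 16 (onB (proj (bell i j)))
                      (matmul 16 (onA (proj (bell i j))) (tensor t1 t2)))"

definition F'' :: "nat \<Rightarrow> nat \<Rightarrow> cmat \<Rightarrow> cmat \<Rightarrow> complex" where
  "F'' i j t1 t2 = pF'' i j t1 t2 / p'' i j t1 t2"

end

theory Submission
  imports Defs
begin

text \<open>Both p' and p'F' have the form Tr[M (\<tau>1 \<otimes> \<tau>2)] and are therefore bilinear, so writing
  \<rho>k = p \<Phi> + (1 - p) \<sigma>k with \<Phi> = |\<Psi>00\<rangle>\<langle>\<Psi>00| splits them into four terms. The mixed terms are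
  entanglement swapping: if one pair is in state \<Phi> and the other in state s, every outcome ij of
  the Bell measurement on A1A2 has probability Tr s / 4, and the swapped pair B1B2 then has the
  same overlap with |\<Psi>ij\<rangle> as s has with |\<Psi>00\<rangle>, so Tr[...] = \<langle>\<Psi>00|s|\<Psi>00\<rangle> / 4.
  The formulas follow from Tr \<sigma>k = 1 and (1 - p) \<langle>\<Psi>00|\<sigma>k|\<Psi>00\<rangle> = F - p; they are polynomial
  identities.\<close>

lemma less_4_cases: "(n::nat) < 4 \<Longrightarrow> n = 0 \<or> n = 1 \<or> n = 2 \<or> n = 3"
  by auto

lemma sum_lessThan_4: "(\<Sum>x<4. f x) = f 0 + f 1 + f 2 + f (3::nat)"
  by (simp add: lessThan_nat_numeral algebra_simps)

lemma sum_lessThan_16: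
  "(\<Sum>x<16. f x) = f 0 + f 1 + f 2 + f 3 + f 4 + f 5 + f 6 + f 7 + f 8 + f 9 + f 10 + f 11
     + f 12 + f 13 + f 14 + f (15::nat)"
  by (simp add: lessThan_nat_numeral algebra_simps)

lemma mtrace_matmul: "mtrace n (matmul n A B) = (\<Sum>x<n. \<Sum>y<n. A x y * B y x)"
  by (simp add: mtrace_def matmul_def)

lemma matmul_assoc: "matmul n A (matmul n B C) = matmul n (matmul n A B) C"
  unfolding matmul_def fun_eq_iff sum_distrib_left sum_distrib_right
  by (auto simp: mult.assoc intro: sum.swap)

lemma expect_linear_combination:
  "expect n (\<lambda>a b. c * X a b + d * Y a b) v = c * expect n X v + d * expect n Y v"
  by (simp add: expect_def sum.distrib sum_distrib_left algebra_simps)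

text \<open>|\<Psi>ij\<rangle> = \<Sum>a (-1)^(j a) |a, a \<oplus> i\<rangle> / \<surd>2.\<close>
definition bell_coeff :: "nat \<Rightarrow> nat \<Rightarrow> nat \<Rightarrow> complex" where
  "bell_coeff i j k =
     (if k < 4 \<and> k mod 2 = (k div 2 + i) mod 2 then (-1) ^ (j * (k div 2)) else 0)"

lemma bell_eq_bell_coeff:
  assumes "i < 2" "j < 2"
  shows "bell i j k = bell_coeff i j k / sqrt 2"
proof -
  have "i = 0 \<or> i = 1" "j = 0 \<or> j = 1" using assms by auto
  moreover have "k = 0 \<or> k = 1 \<or> k = 2 \<or> k = 3 \<or> k \<ge> 4" by auto
  ultimately show ?thesis
    by (auto simp: bell_def bell_coeff_def mapply_def kron_def matmul_def idm_def pauliX_def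
        pauliZ_def phi_plus_def lessThan_nat_numeral)
qed

lemma proj_bell:
  assumes "i < 2" "j < 2"
  shows "proj (bell i j) = (\<lambda>a b. bell_coeff i j a * bell_coeff i j b / 2)"
proof -
  have "cnj (bell_coeff i j b) = bell_coeff i j b" for b
    by (simp add: bell_coeff_def)
  then show ?thesis
    by (simp add: fun_eq_iff proj_def bell_eq_bell_coeff[OF assms] field_simps
        power2_eq_square[symmetric] flip: of_real_power)
qed

lemma expect_bell_0_0: "expect 4 M (bell 0 0) = (M 0 0 + M 0 3 + M 3 0 + M 3 3) / 2"
proof -
  have "cnj (complex_of_real (1 / sqrt 2)) * complex_of_real (1 / sqrt 2) = 1 / 2"
    by (simp flip: of_real_mult)
  then show ?thesis
    by (simp add: expect_def bell_eq_bell_coeff bell_coeff_def sum_lessThan_4 algebra_simps)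
qed

lemma mtrace_proj_bell_0_0: "mtrace 4 (proj (bell 0 0)) = 1"
  by (simp add: mtrace_def sum_lessThan_4 proj_bell bell_coeff_def)

lemma expect_proj_bell_0_0: "expect 4 (proj (bell 0 0)) (bell 0 0) = 1"
  by (simp add: expect_bell_0_0 proj_bell bell_coeff_def)

definition regA :: "nat \<Rightarrow> nat" where
  "regA x = 2 * (x div 8) + (x div 2) mod 2"

definition regB :: "nat \<Rightarrow> nat" where
  "regB x = 2 * ((x div 4) mod 2) + x mod 2"

definition join_regs :: "nat \<Rightarrow> nat \<Rightarrow> nat" where
  "join_regs a b = 8 * (a div 2) + 4 * (b div 2) + 2 * (a mod 2) + b mod 2"

lemma regA_join_regs: "a < 4 \<Longrightarrow> b < 4 \<Longrightarrow> regA (join_regs a b) = a"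
  unfolding regA_def join_regs_def by (auto dest!: less_4_cases)

lemma regB_join_regs: "a < 4 \<Longrightarrow> b < 4 \<Longrightarrow> regB (join_regs a b) = b"
  unfolding regB_def join_regs_def by (auto dest!: less_4_cases)

lemma join_regs_less: "a < 4 \<Longrightarrow> b < 4 \<Longrightarrow> join_regs a b < 16"
  unfolding join_regs_def by (auto dest!: less_4_cases)

lemma binary_digits_nat:
  "8 * (x div 8) + 4 * (x div 4 mod 2) + 2 * (x div 2 mod 2) + x mod 2 = (x::nat)"
proof -
  have "x div 8 = x div 4 div 2" "x div 4 = x div 2 div 2"
    by (simp_all flip: div_mult2_eq)
  then show ?thesis
    using div_mult_mod_eq[of "x div 4" 2] div_mult_mod_eq[of "x div 2" 2] div_mult_mod_eq[of x 2]
    by linarith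
qed

lemma join_regs_regA_regB: "join_regs (regA x) (regB x) = x"
  unfolding regA_def regB_def join_regs_def by (simp add: binary_digits_nat)

lemma regA_less: "x < 16 \<Longrightarrow> regA x < 4"
  using div_le_mono[of x 15 8] unfolding regA_def by simp

lemma regB_less: "regB x < 4"
  unfolding regB_def by linarith

lemma double_plus_bit_eq_iff:
  "u < 2 \<Longrightarrow> v < 2 \<Longrightarrow> 2 * a + u = 2 * b + v \<longleftrightarrow> a = b \<and> u = (v::nat)"
  by arith

lemma onA_eq: "onA P x y = (if regB x = regB y then P (regA x) (regA y) else 0)"
  unfolding onA_def regA_def regB_def by (simp add: double_plus_bit_eq_iff)

lemma onB_eq: "onB P x y = (if regA x = regA y then P (regB x) (regB y) else 0)"
  unfolding onB_def regA_def regB_def by (simp add: double_plus_bit_eq_iff)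

lemma matmul_onB_onA:
  assumes "x < 16"
  shows "matmul 16 (onB P) (onA Q) x z = P (regB x) (regB z) * Q (regA x) (regA z)"
proof -
  define y0 where "y0 = join_regs (regA x) (regB z)"
  have regs: "regA y0 = regA x" "regB y0 = regB z"
    using regA_less[OF assms] regB_less by (simp_all add: y0_def regA_join_regs regB_join_regs)
  have "y0 < 16"
    using regA_less[OF assms] regB_less by (simp add: y0_def join_regs_less)
  have "regA x = regA y \<and> regB y = regB z \<longleftrightarrow> y = y0" for y
    using join_regs_regA_regB[of y] regs by (auto simp: y0_def)
  then have "onB P x y * onA Q y z =
      (if y = y0 then P (regB x) (regB z) * Q (regA x) (regA z) else 0)" for y
    by (auto simp: onA_eq onB_eq regs)
  then show ?thesis
    using \<open>y0 < 16\<close> by (simp add: matmul_def)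
qed

definition trace_tensor :: "cmat \<Rightarrow> cmat \<Rightarrow> cmat \<Rightarrow> complex" where
  "trace_tensor M t1 t2 = mtrace 16 (matmul 16 M (tensor t1 t2))"

lemma p''_eq_trace_tensor: "p'' i j = trace_tensor (onA (proj (bell i j)))"
  by (simp add: fun_eq_iff p''_def trace_tensor_def)

lemma pF''_eq_trace_tensor:
  "pF'' i j = trace_tensor (matmul 16 (onB (proj (bell i j))) (onA (proj (bell i j))))"
  by (simp add: fun_eq_iff pF''_def trace_tensor_def matmul_assoc)

lemma trace_tensor_linear_left:
  "trace_tensor M (\<lambda>a b. c * X a b + d * Y a b) T = c * trace_tensor M X T + d * trace_tensor M Y T"
  by (simp add: trace_tensor_def mtrace_def matmul_def tensor_def kron_def sum_distrib_left
      sum.distrib algebra_simps)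

lemma trace_tensor_linear_right:
  "trace_tensor M T (\<lambda>a b. c * X a b + d * Y a b) = c * trace_tensor M T X + d * trace_tensor M T Y"
  by (simp add: trace_tensor_def mtrace_def matmul_def tensor_def kron_def sum_distrib_left
      sum.distrib algebra_simps)

lemma p''_bell_left:
  assumes "i < 2" "j < 2"
  shows "p'' i j (proj (bell 0 0)) s = mtrace 4 s / 4"
proof -
  have "i = 0 \<or> i = 1" "j = 0 \<or> j = 1" using assms by auto
  then show ?thesis
    by (elim disjE; simp add: p''_def mtrace_def matmul_def tensor_def kron_def onA_def
        sum_lessThan_16 sum_lessThan_4 proj_bell bell_coeff_def field_simps;
        simp add: numeral_2_eq_2 numeral_3_eq_3)
qed

lemma p''_bell_right:
  assumes "i < 2" "j < 2"
  shows "p'' i j s (proj (bell 0 0)) = mtrace 4 s / 4"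
proof -
  have "i = 0 \<or> i = 1" "j = 0 \<or> j = 1" using assms by auto
  then show ?thesis
    by (elim disjE; simp add: p''_def mtrace_def matmul_def tensor_def kron_def onA_def
        sum_lessThan_16 sum_lessThan_4 proj_bell bell_coeff_def field_simps;
        simp add: numeral_2_eq_2 numeral_3_eq_3)
qed

lemma pF''_as_sum:
  "pF'' i j t1 t2 = (\<Sum>x<16. \<Sum>z<16.
     proj (bell i j) (regB x) (regB z) * proj (bell i j) (regA x) (regA z) * tensor t1 t2 z x)"
  unfolding pF''_eq_trace_tensor trace_tensor_def mtrace_matmul
  by (intro sum.cong refl) (simp add: matmul_onB_onA)

lemma pF''_bell_left:
  assumes "i < 2" "j < 2"
  shows "pF'' i j (proj (bell 0 0)) s = expect 4 s (bell 0 0) / 4"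
proof -
  have "i = 0 \<or> i = 1" "j = 0 \<or> j = 1" using assms by auto
  then show ?thesis
    unfolding pF''_as_sum
    by (elim disjE; simp add: regA_def regB_def tensor_def kron_def sum_lessThan_16 proj_bell
        bell_coeff_def expect_bell_0_0 field_simps;
        simp add: numeral_2_eq_2 numeral_3_eq_3)
qed

lemma pF''_bell_right:
  assumes "i < 2" "j < 2"
  shows "pF'' i j s (proj (bell 0 0)) = expect 4 s (bell 0 0) / 4"
proof -
  have "i = 0 \<or> i = 1" "j = 0 \<or> j = 1" using assms by auto
  then show ?thesis
    unfolding pF''_as_sum
    by (elim disjE; simp add: regA_def regB_def tensor_def kron_def sum_lessThan_16 proj_bell
        bell_coeff_def expect_bell_0_0 field_simps;
        simp add: numeral_2_eq_2 numeral_3_eq_3)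
qed

lemma p''_bell_mixture:
  assumes "i < 2" "j < 2" "mtrace 4 \<sigma>1 = 1" "mtrace 4 \<sigma>2 = 1"
  shows "4 * p'' i j (\<lambda>a b. q * proj (bell 0 0) a b + (1 - q) * \<sigma>1 a b)
                     (\<lambda>a b. q * proj (bell 0 0) a b + (1 - q) * \<sigma>2 a b)
    = 2 * q - q^2 + 4 * (1 - q)^2 * p'' i j \<sigma>1 \<sigma>2"
  unfolding p''_eq_trace_tensor trace_tensor_linear_left trace_tensor_linear_right
  unfolding p''_eq_trace_tensor[symmetric]
  using assms by (simp add: p''_bell_left p''_bell_right mtrace_proj_bell_0_0 field_simps
      power2_eq_square)

lemma pF''_bell_mixture:
  assumes "i < 2" "j < 2"
    and "f = q + (1 - q) * expect 4 \<sigma>1 (bell 0 0)" "f = q + (1 - q) * expect 4 \<sigma>2 (bell 0 0)"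
  shows "4 * pF'' i j (\<lambda>a b. q * proj (bell 0 0) a b + (1 - q) * \<sigma>1 a b)
                      (\<lambda>a b. q * proj (bell 0 0) a b + (1 - q) * \<sigma>2 a b)
    = 2 * q * f - q^2 + 4 * (1 - q)^2 * pF'' i j \<sigma>1 \<sigma>2"
proof -
  have "4 * pF'' i j (\<lambda>a b. q * proj (bell 0 0) a b + (1 - q) * \<sigma>1 a b)
                      (\<lambda>a b. q * proj (bell 0 0) a b + (1 - q) * \<sigma>2 a b)
    = q * (q + (1 - q) * expect 4 \<sigma>1 (bell 0 0)) + q * (q + (1 - q) * expect 4 \<sigma>2 (bell 0 0))
      - q^2 + 4 * (1 - q)^2 * pF'' i j \<sigma>1 \<sigma>2"
    unfolding pF''_eq_trace_tensor trace_tensor_linear_left trace_tensor_linear_right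
    unfolding pF''_eq_trace_tensor[symmetric]
    using assms(1,2) by (simp add: pF''_bell_left pF''_bell_right expect_proj_bell_0_0 field_simps
        power2_eq_square)
  then show ?thesis
    unfolding assms(3,4)[symmetric] by simp
qed

theorem lemma5:
  fixes F p :: real and \<sigma>1 \<sigma>2 \<rho>1 \<rho>2 :: cmat and i j :: nat
  assumes "0 \<le> F" "F \<le> 1" "0 \<le> p" "p \<le> F"
    and "density 4 \<sigma>1" "density 4 \<sigma>2"
    and "\<rho>1 = (\<lambda>a b. complex_of_real p * proj (bell 0 0) a b + complex_of_real (1 - p) * \<sigma>1 a b)"
    and "\<rho>2 = (\<lambda>a b. complex_of_real p * proj (bell 0 0) a b + complex_of_real (1 - p) * \<sigma>2 a b)"
    and "S_pF p F \<rho>1" "S_pF p F \<rho>2"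
    and "i < 2" "j < 2"
  shows "p'' i j \<rho>1 \<rho>2 = complex_of_real (p / 2 - p^2 / 4) + complex_of_real ((1 - p)^2) * p'' i j \<sigma>1 \<sigma>2 \<and>
         F'' i j \<rho>1 \<rho>2 =
           (complex_of_real (2 * p * F - p^2) + 4 * complex_of_real ((1 - p)^2) * pF'' i j \<sigma>1 \<sigma>2) /
           (complex_of_real (2 * p - p^2) + 4 * complex_of_real ((1 - p)^2) * p'' i j \<sigma>1 \<sigma>2)"
proof -
  define q where "q = complex_of_real p"
  have \<rho>: "\<rho>1 = (\<lambda>a b. q * proj (bell 0 0) a b + (1 - q) * \<sigma>1 a b)"
    "\<rho>2 = (\<lambda>a b. q * proj (bell 0 0) a b + (1 - q) * \<sigma>2 a b)"
    using assms(7,8) by (simp_all add: q_def)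
  have tr: "mtrace 4 \<sigma>1 = 1" "mtrace 4 \<sigma>2 = 1"
    using assms(5,6) unfolding density_def by blast+
  have p: "4 * p'' i j \<rho>1 \<rho>2 = 2 * q - q^2 + 4 * (1 - q)^2 * p'' i j \<sigma>1 \<sigma>2"
    unfolding \<rho> by (rule p''_bell_mixture[OF assms(11,12) tr])
  have "complex_of_real F = q + (1 - q) * expect 4 \<sigma>1 (bell 0 0)"
    "complex_of_real F = q + (1 - q) * expect 4 \<sigma>2 (bell 0 0)"
    using assms(9,10) unfolding S_pF_def \<rho> by (simp_all add: expect_linear_combination expect_proj_bell_0_0)
  then have pF: "4 * pF'' i j \<rho>1 \<rho>2 = 2 * q * F - q^2 + 4 * (1 - q)^2 * pF'' i j \<sigma>1 \<sigma>2"
    unfolding \<rho> using assms(11,12) by (intro pF''_bell_mixture)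
  have "F'' i j \<rho>1 \<rho>2 = 4 * pF'' i j \<rho>1 \<rho>2 / (4 * p'' i j \<rho>1 \<rho>2)"
    by (simp add: F''_def)
  then have "F'' i j \<rho>1 \<rho>2 = (2 * q * F - q^2 + 4 * (1 - q)^2 * pF'' i j \<sigma>1 \<sigma>2) /
      (2 * q - q^2 + 4 * (1 - q)^2 * p'' i j \<sigma>1 \<sigma>2)"
    unfolding p pF .
  with p show ?thesis
    by (simp add: q_def field_simps)
qed

end
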